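(* The map $\mathcal{A}\ni A\mapsto\mathcal{P}_A\in\mathrm{Fix}(\Pi)$ is injective.
   Context: mm-spaces are triples $(X,d_X,\mu_X)$ with $(X,d_X)$ complete separable metric and $\mu_X$ a Borel probability measure, with $X=\operatorname{supp}\mu_X$. $\mathcal{X}$ is the set of their isomorphism classes under measure-preserving isometries of supports. A pyramid is a nonempty subset of $\mathcal{X}$ that is closed for the box distance, downward closed under the Lipschitz order ($Y\prec X$ iff there is a 1-Lipschitz $f\colon X\to Y$ with $f_*\mu_X=\mu_Y$), and such that any two elements are dominated by a common element. $\Pi$ is the set of pyramids. $\mathbb{R}_+$ acts on $\Pi$ by $t\mathcal{P}=\{(X,t\,d_X,\mu_X):X\in\mathcal{P}\}$, and $\mathrm{Fix}(\Pi)$ is its fixed-point set. $\mathcal{A}$ is the set of monotone non-increasing sequences $A=\{a_i\}_{i\ge1}$ of nonnegative reals with $\sum a_i\le1$. $\mathcal{P}_A=\{X\in\mathcal{X}:\exists\{x_i\}_{i\ge1}\subset X\text{ with }\sum_i a_i\delta_{x_i}\le\mu_X\}$, which is a pyramid in $\mathrm{Fix}(\Pi)$. *)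

theory Defs
  imports "HOL-Probability.Probability"
begin

definition borel_sets_of :: "'a metric \<Rightarrow> 'a set set" where
  "borel_sets_of m = sigma_sets (mspace m) {U. openin (mtopology_of m) U}"

definition mm_space :: "'a metric \<Rightarrow> 'a measure \<Rightarrow> bool" where
  "mm_space m \<mu> \<longleftrightarrow>
     mcomplete_of m \<and> separable_space (mtopology_of m) \<and>
     space \<mu> = mspace m \<and> sets \<mu> = borel_sets_of m \<and> prob_space \<mu> \<and>
     (\<forall>x\<in>mspace m. \<forall>r>0. measure \<mu> (mball_of m x r) > 0)"

text \<open>The set \<A> of non-increasing nonnegative sequences with sum at most 1
  (indexed from 0 instead of 1).\<close>
definition seqA :: "(nat \<Rightarrow> real) set" where
  "seqA = {a. (\<forall>i. 0 \<le> a i) \<and> (\<forall>i. a (Suc i) \<le> a i) \<and> summable a \<and> suminf a \<le> 1}"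

text \<open>The pyramid P_A, represented by all mm-spaces whose underlying set is a
  subset of the reals (every complete separable metric space has cardinality
  at most the continuum, so every isomorphism class has such a representative,
  and membership is isomorphism-invariant).\<close>
definition pyrA :: "(nat \<Rightarrow> real) \<Rightarrow> (real metric \<times> real measure) set" where
  "pyrA a = {(m, \<mu>). mm_space m \<mu> \<and>
      (\<exists>x :: nat \<Rightarrow> real. (\<forall>i. x i \<in> mspace m) \<and>
         (\<forall>S\<in>sets \<mu>. (\<Sum>i. a i * indicator S (x i)) \<le> measure \<mu> S))}"

end

theory Submission
  imports Defs
begin

text \<open>Let \<open>a\<close> and \<open>b\<close> first differ at the index \<open>k\<close>, say \<open>a\<^sub>k < b\<^sub>k\<close>. Take the discrete
  mm-space with atoms of masses \<open>a\<^sub>0, a\<^sub>1, \<dots>\<close> and with the remaining mass \<open>1 - \<Sum>a\<^sub>i\<close>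
  split into \<open>N\<close> atoms, each lighter than \<open>b\<^sub>k\<close>. It lies in \<open>P\<^sub>a\<close>. If it lay in \<open>P\<^sub>b\<close>,
  witnessed by points \<open>y\<^sub>i\<close>, then each of \<open>y\<^sub>0, \<dots>, y\<^sub>k\<close> would carry mass at least
  \<open>b\<^sub>k > a\<^sub>k\<close>, so it would be one of the atoms of mass \<open>a\<^sub>0, \<dots>, a\<^sub>k\<^sub>-\<^sub>1\<close>. These atoms would
  then carry \<open>b\<^sub>0 + \<dots> + b\<^sub>k = a\<^sub>0 + \<dots> + a\<^sub>k\<^sub>-\<^sub>1 + b\<^sub>k\<close>, which exceeds their total mass.\<close>

lemma seqA_iff:
  "a \<in> seqA \<longleftrightarrow> (\<forall>i. 0 \<le> a i) \<and> decseq a \<and> summable a \<and> suminf a \<le> 1"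
  by (auto simp: seqA_def decseq_Suc_iff)

lemma sum_le_suminf_indicator:
  fixes b :: "nat \<Rightarrow> real"
  assumes "\<And>i. 0 \<le> b i" and "summable b" and "finite I" and "\<And>i. i \<in> I \<Longrightarrow> x i \<in> A"
  shows "(\<Sum>i\<in>I. b i) \<le> (\<Sum>i. b i * indicator A (x i))"
proof -
  have "summable (\<lambda>i. b i * indicator A (x i))"
    by (rule summable_comparison_test'[OF \<open>summable b\<close>]) (auto simp: assms(1) indicator_def)
  then have "(\<Sum>i\<in>I. b i * indicator A (x i)) \<le> (\<Sum>i. b i * indicator A (x i))"
    by (rule sum_le_suminf) (auto simp: assms(1,3))
  moreover have "(\<Sum>i\<in>I. b i * indicator A (x i)) = (\<Sum>i\<in>I. b i)"
    using assms(4) by simp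
  ultimately show ?thesis by simp
qed

lemma suminf_indicator_le_measure_pmf:
  fixes a :: "nat \<Rightarrow> real"
  assumes "\<And>i. 0 \<le> a i" and "inj_on x {i. 0 < a i}" and "\<And>i. a i \<le> pmf q (x i)"
  shows "(\<Sum>i. a i * indicator A (x i)) \<le> measure_pmf.prob q A"
proof -
  define D where "D i = (if 0 < a i \<and> x i \<in> A then {x i} else {})" for i
  have "disjoint_family D"
    using assms(2) by (auto simp: disjoint_family_on_def D_def inj_on_def)
  then have sums: "(\<lambda>i. measure_pmf.prob q (D i)) sums measure_pmf.prob q (\<Union>i. D i)"
    by (intro measure_pmf.finite_measure_UNION) simp_all
  have le: "a i * indicator A (x i) \<le> measure_pmf.prob q (D i)" for i
    using assms(1,3)[of i] by (auto simp: D_def measure_pmf_single)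
  have "summable (\<lambda>i. a i * indicator A (x i))"
    by (rule summable_comparison_test'[OF sums_summable[OF sums]]) (use le assms(1) in auto)
  then have "(\<Sum>i. a i * indicator A (x i)) \<le> measure_pmf.prob q (\<Union>i. D i)"
    using suminf_le[OF le _ sums_summable[OF sums]] sums by (simp add: sums_iff)
  also have "\<dots> \<le> measure_pmf.prob q A"
    by (rule measure_pmf.finite_measure_mono) (auto simp: D_def split: if_splits)
  finally show ?thesis .
qed

definition discrete_metric_on :: "'a set \<Rightarrow> 'a metric" where
  "discrete_metric_on S = metric (S, discrete_metric.dd)"

lemma
  shows mspace_discrete_metric_on: "mspace (discrete_metric_on S) = S"
    and mdist_discrete_metric_on: "mdist (discrete_metric_on S) = discrete_metric.dd"
    and mtopology_of_discrete_metric_on: "mtopology_of (discrete_metric_on S) = discrete_topology S"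
    and mcomplete_of_discrete_metric_on: "mcomplete_of (discrete_metric_on S)"
  by (simp_all add: discrete_metric_on_def Metric_space.mspace_metric[OF metric_M_dd]
      Metric_space.mdist_metric[OF metric_M_dd] Metric_space.mtopology_of[OF metric_M_dd]
      Metric_space.mcomplete_of[OF metric_M_dd] discrete_metric.mtopology_discrete_metric
      discrete_metric.mcomplete_discrete_metric)

definition discrete_pmf_space :: "'a pmf \<Rightarrow> 'a metric \<times> 'a measure" where
  "discrete_pmf_space q =
     (discrete_metric_on (set_pmf q), restrict_space (measure_pmf q) (set_pmf q))"

lemma mm_space_discrete_pmf:
  "mm_space (discrete_metric_on (set_pmf q)) (restrict_space (measure_pmf q) (set_pmf q))"
  unfolding mm_space_def
proof (intro conjI ballI allI impI)
  let ?S = "set_pmf q"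
  have "Collect (openin (discrete_topology ?S)) = Pow ?S" by auto
  then have "borel_sets_of (discrete_metric_on ?S) = Pow ?S"
    unfolding borel_sets_of_def mtopology_of_discrete_metric_on mspace_discrete_metric_on
    using sigma_algebra.sigma_sets_eq[OF sigma_algebra_Pow] by metis
  then show "sets (restrict_space (measure_pmf q) ?S) = borel_sets_of (discrete_metric_on ?S)"
    by (auto simp: sets_restrict_space)
  show "separable_space (mtopology_of (discrete_metric_on ?S))"
    by (simp add: mtopology_of_discrete_metric_on separable_space_discrete_topology
        countable_set_pmf)
  show "prob_space (restrict_space (measure_pmf q) ?S)"
    by (rule prob_space_restrict_space) (auto simp: emeasure_pmf)
  fix x and r :: real
  assume "x \<in> mspace (discrete_metric_on ?S)" and "0 < r"
  then have "{x} \<subseteq> mball_of (discrete_metric_on ?S) x r"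
    and "mball_of (discrete_metric_on ?S) x r \<subseteq> ?S"
    by (auto simp: mspace_discrete_metric_on mdist_discrete_metric_on discrete_metric.dd_def)
  moreover have "0 < pmf q x"
    using \<open>x \<in> mspace (discrete_metric_on ?S)\<close> by (simp add: mspace_discrete_metric_on pmf_positive)
  ultimately show
    "0 < measure (restrict_space (measure_pmf q) ?S) (mball_of (discrete_metric_on ?S) x r)"
    using measure_pmf.finite_measure_mono[of "{x}" "mball_of (discrete_metric_on ?S) x r" q]
    by (simp add: measure_restrict_space measure_pmf_single)
qed (simp_all add: mcomplete_of_discrete_metric_on mspace_discrete_metric_on space_restrict_space)

lemma discrete_pmf_space_in_pyrA_iff:
  "discrete_pmf_space q \<in> pyrA a \<longleftrightarrow>
     (\<exists>x. (\<forall>i. x i \<in> set_pmf q) \<and>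
          (\<forall>A \<subseteq> set_pmf q. (\<Sum>i. a i * indicator A (x i)) \<le> measure_pmf.prob q A))"
proof -
  have "sets (restrict_space (measure_pmf q) (set_pmf q)) = Pow (set_pmf q)"
    by (auto simp: sets_restrict_space)
  moreover have "measure (restrict_space (measure_pmf q) (set_pmf q)) A = measure_pmf.prob q A"
    if "A \<subseteq> set_pmf q" for A
    using that by (simp add: measure_restrict_space)
  ultimately show ?thesis
    using mm_space_discrete_pmf[of q]
    by (simp add: discrete_pmf_space_def pyrA_def mspace_discrete_metric_on Ball_def)
qed

definition padded_weights :: "(nat \<Rightarrow> real) \<Rightarrow> nat \<Rightarrow> nat \<Rightarrow> real" where
  "padded_weights a N n = (if n < N then (1 - suminf a) / N else a (n - N))"

definition padded_pmf :: "(nat \<Rightarrow> real) \<Rightarrow> nat \<Rightarrow> real pmf" where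
  "padded_pmf a N = map_pmf real (embed_pmf (padded_weights a N))"

lemma padded_weights_nonneg: "a \<in> seqA \<Longrightarrow> 0 \<le> padded_weights a N n"
  by (simp add: seqA_iff padded_weights_def)

lemma padded_weights_sums:
  assumes "a \<in> seqA" and "0 < N"
  shows "padded_weights a N sums 1"
proof -
  have "(\<lambda>i. padded_weights a N (i + N)) sums suminf a"
    using assms(1) by (simp add: seqA_iff padded_weights_def summable_sums)
  moreover have "(\<Sum>i<N. padded_weights a N i) = 1 - suminf a"
    using assms(2) by (simp add: padded_weights_def)
  ultimately show ?thesis by (simp add: sums_iff_shift)
qed

lemma pmf_padded_pmf:
  assumes "a \<in> seqA" and "0 < N"
  shows "pmf (padded_pmf a N) (real n) = padded_weights a N n"
proof -
  have "(\<integral>\<^sup>+x. ennreal (padded_weights a N x) \<partial>count_space UNIV) = 1"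
    using suminf_ennreal_eq[OF padded_weights_nonneg padded_weights_sums] assms
    by (simp add: nn_integral_count_space_nat)
  then show ?thesis
    unfolding padded_pmf_def
    by (simp add: pmf_map_inj' inj_on_def pmf_embed_pmf padded_weights_nonneg assms(1))
qed

lemma set_padded_pmf:
  assumes "a \<in> seqA" and "0 < N"
  shows "set_pmf (padded_pmf a N) = real ` {n. 0 < padded_weights a N n}"
proof -
  have "set_pmf (padded_pmf a N) \<subseteq> range real"
    by (auto simp: padded_pmf_def)
  then show ?thesis
    using pmf_padded_pmf[OF assms] padded_weights_nonneg[OF assms(1)]
    by (force simp: set_pmf_iff less_le)
qed

lemma measure_padded_pmf_block:
  assumes "a \<in> seqA" and "0 < N"
  shows "measure_pmf.prob (padded_pmf a N) (real ` {N..<N + k}) = (\<Sum>j<k. a j)"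
proof -
  have "measure_pmf.prob (padded_pmf a N) (real ` {N..<N + k})
      = (\<Sum>n\<in>{N..<N + k}. pmf (padded_pmf a N) (real n))"
    by (simp add: measure_measure_pmf_finite sum.reindex)
  also have "\<dots> = (\<Sum>n\<in>{0 + N..<k + N}. padded_weights a N n)"
    by (simp add: pmf_padded_pmf assms add.commute)
  also have "\<dots> = (\<Sum>j<k. a j)"
    by (simp only: sum.shift_bounds_nat_ivl atLeast0LessThan) (simp add: padded_weights_def)
  finally show ?thesis .
qed

lemma padded_weights_heavy_index:
  assumes "a \<in> seqA" and "(1 - suminf a) / N < c" and "a k < c" and "c \<le> padded_weights a N n"
  shows "n \<in> {N..<N + k}"
proof -
  have "\<not> n < N"
    using assms(2,4) by (auto simp: padded_weights_def)
  moreover have "\<not> k \<le> n - N"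
  proof
    assume "k \<le> n - N"
    then have "a (n - N) \<le> a k"
      using assms(1) by (simp add: seqA_iff decseqD)
    then show False
      using assms(3,4) \<open>\<not> n < N\<close> by (simp add: padded_weights_def)
  qed
  ultimately show ?thesis by auto
qed

lemma padded_pmf_in_pyrA:
  assumes "a \<in> seqA" and "0 < N"
  shows "discrete_pmf_space (padded_pmf a N) \<in> pyrA a"
proof -
  let ?q = "padded_pmf a N"
  obtain y\<^sub>0 where "y\<^sub>0 \<in> set_pmf ?q"
    using set_pmf_not_empty[of ?q] by blast
  define x where "x i = (if 0 < a i then real (i + N) else y\<^sub>0)" for i
  have "x i \<in> set_pmf ?q" for i
    using \<open>y\<^sub>0 \<in> set_pmf ?q\<close> unfolding set_padded_pmf[OF assms]
    by (auto simp: x_def padded_weights_def simp del: of_nat_add)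
  moreover have "a i \<le> pmf ?q (x i)" for i
    using assms(1) by (auto simp: x_def pmf_padded_pmf[OF assms] padded_weights_def seqA_iff
        simp del: of_nat_add intro: order.trans[OF _ pmf_nonneg])
  moreover have "inj_on x {i. 0 < a i}"
    by (auto simp: inj_on_def x_def)
  ultimately show ?thesis
    unfolding discrete_pmf_space_in_pyrA_iff
    using suminf_indicator_le_measure_pmf assms(1) seqA_iff by blast
qed

lemma padded_pmf_notin_pyrA:
  assumes "a \<in> seqA" and "b \<in> seqA" and "\<forall>i<k. a i = b i" and "a k < b k"
    and "0 < N" and "(1 - suminf a) / N < b k"
  shows "discrete_pmf_space (padded_pmf a N) \<notin> pyrA b"
proof
  let ?q = "padded_pmf a N"
  assume "discrete_pmf_space ?q \<in> pyrA b"
  then obtain y where y: "\<And>i. y i \<in> set_pmf ?q"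
    and dom: "\<And>A. A \<subseteq> set_pmf ?q \<Longrightarrow>
                (\<Sum>i. b i * indicator A (y i)) \<le> measure_pmf.prob ?q A"
    unfolding discrete_pmf_space_in_pyrA_iff by blast
  have b: "\<And>i. 0 \<le> b i" "decseq b" "summable b"
    using assms(2) by (simp_all add: seqA_iff)
  define T where "T = real ` {N..<N + k}"
  have "y i \<in> T" if "i \<le> k" for i
  proof -
    obtain n where n: "y i = real n"
      using y[of i] set_padded_pmf[OF assms(1,5)] by auto
    have "b k \<le> b i"
      using b(2) that by (rule decseqD)
    also have "\<dots> \<le> (\<Sum>j. b j * indicator {y i} (y j))"
      using sum_le_suminf_indicator[of b "{i}" y "{y i}"] b by simp
    also have "\<dots> \<le> pmf ?q (y i)"
      using dom[of "{y i}"] y[of i] by (simp add: measure_pmf_single)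
    also have "\<dots> = padded_weights a N n"
      by (simp add: n pmf_padded_pmf assms(1,5))
    finally have "n \<in> {N..<N + k}"
      using padded_weights_heavy_index assms(1,4,6) by blast
    then show ?thesis
      by (simp add: T_def n)
  qed
  then have "(\<Sum>i<Suc k. b i) \<le> (\<Sum>i. b i * indicator (T \<inter> set_pmf ?q) (y i))"
    using y by (intro sum_le_suminf_indicator b) (auto simp: less_Suc_eq_le)
  also have "\<dots> \<le> measure_pmf.prob ?q (T \<inter> set_pmf ?q)"
    by (rule dom) blast
  also have "\<dots> \<le> measure_pmf.prob ?q T"
    by (rule measure_pmf.finite_measure_mono) auto
  also have "\<dots> = (\<Sum>i<k. b i)"
    using measure_padded_pmf_block[OF assms(1,5)] assms(3) by (simp add: T_def)
  finally have "b k \<le> 0"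
    by simp
  moreover have "0 \<le> a k"
    using assms(1) by (simp add: seqA_iff)
  ultimately show False
    using assms(4) by simp
qed

lemma not_pyrA_subset_at_first_difference:
  assumes "a \<in> seqA" and "b \<in> seqA" and "\<forall>i<k. a i = b i" and "a k < b k"
  shows "\<not> pyrA a \<subseteq> pyrA b"
proof -
  have "0 \<le> a k"
    using assms(1) by (simp add: seqA_iff)
  with assms(4) have "0 < b k"
    by simp
  then obtain N where N: "1 < real N * b k"
    using ex_less_of_nat_mult by blast
  then have "0 < N"
    by (cases N) auto
  have "(1 - suminf a) / N \<le> 1 / N"
    using assms(1) by (simp add: seqA_iff suminf_nonneg divide_right_mono)
  also have "\<dots> < b k"
    using N \<open>0 < N\<close> by (simp add: field_simps)
  finally show ?thesis
    using padded_pmf_in_pyrA padded_pmf_notin_pyrA assms \<open>0 < N\<close> by blast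
qed

theorem lemma4p2:
  fixes a b :: "nat \<Rightarrow> real"
  assumes "a \<in> seqA" and "b \<in> seqA" and "pyrA a = pyrA b"
  shows "a = b"
proof (rule ccontr)
  assume "a \<noteq> b"
  then obtain k where "a k \<noteq> b k" and agree: "\<forall>i<k. a i = b i"
    using exists_least_iff[of "\<lambda>i. a i \<noteq> b i"] by auto
  then consider "a k < b k" | "b k < a k"
    by linarith
  then show False
  proof cases
    case 1
    then show False
      using not_pyrA_subset_at_first_difference[OF assms(1,2) agree] assms(3) by simp
  next
    case 2
    then show False
      using not_pyrA_subset_at_first_difference[OF assms(2,1), of k] agree assms(3) by auto
  qed
qed

end
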